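(* With the notation below: (i) For each $H\in C_p$ there is a unique map $\chi_H:H\to H_p/(p-1)H_p\simeq\mathbb{Z}/(p-1)\mathbb{Z}$ such that $\chi_H=\chi\circ\lambda^{-1}$ (i.e. $\chi_H(x)=\chi(\lambda^{-1}x)$) for every $\lambda\in\mathbb{R}_+^*$ with $H=\lambda H_p$. (ii) The subgroup $\mathcal P$ of principal divisors is contained in the kernel of the group homomorphism $\chi:\mathrm{Div}(C_p)\to\mathbb{Z}/(p-1)\mathbb{Z}$, $\chi(D)=\sum_H\chi_H(D(H))$.
   Context: Let $p$ be a prime and $H_p=\mathbb{Z}[1/p]\subset\mathbb{Q}$. The ring homomorphism $\chi:H_p\to\mathbb{Z}/(p-1)\mathbb{Z}$ is $\chi(a/p^n)=a\bmod(p-1)$ ($a\in\mathbb{Z}$, $n\in\mathbb{N}$); its kernel is $(p-1)H_p$. $C_p$ is the set of subgroups $H=\lambda H_p\subset\mathbb{R}$, $\lambda>0$. $\mathcal K(C_p)$: continuous piecewise affine functions $f:(0,\infty)\to\mathbb{R}$ with slopes in $H_p$ and $f(p\lambda)=f(\lambda)$ (plus the constant $-\infty$). For real-valued $f$ and $H=\lambda H_p$, $\mathrm{Ord}_H(f)=h_+-h_-$ with $h_\pm=\lim_{\epsilon\to0\pm}(f((1+\epsilon)\lambda)-f(\lambda))/\epsilon\in H$. A divisor $D$ on $C_p$ assigns $D(H)\in H$ to each $H\in C_p$, zero for all but finitely many $H$; $\mathrm{Div}(C_p)$ is the group of divisors under pointwise addition; the principal divisor of real-valued $f\in\mathcal K(C_p)$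 is $(f)(H)=\mathrm{Ord}_H(f)$, and $\mathcal P$ is the subgroup of principal divisors. *)

theory Defs
  imports "HOL-Analysis.Analysis" "HOL-Computational_Algebra.Primes"
begin

definition Hp :: "nat \<Rightarrow> real set" where
  "Hp p = {of_int a / real p ^ n | a n. True}"

text \<open>chi : H_p -> Z/(p-1)Z, chi(a/p^n) = a mod (p-1); residues represented in {0..p-2}.\<close>
definition chi :: "nat \<Rightarrow> real \<Rightarrow> int" where
  "chi p x = (THE r. \<exists>a n. x = of_int a / real p ^ n \<and> r = a mod (int p - 1))"

definition scale :: "real \<Rightarrow> real set \<Rightarrow> real set" where
  "scale l S = (\<lambda>x. l * x) ` S"

definition Cp :: "nat \<Rightarrow> real set set" where
  "Cp p = {scale l (Hp p) | l. l > 0}"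

definition chiH :: "nat \<Rightarrow> real set \<Rightarrow> real \<Rightarrow> int" where
  "chiH p H x = chi p (x / (SOME l. l > 0 \<and> H = scale l (Hp p)))"

text \<open>Real-valued elements of K(C_p): continuous piecewise affine functions on (0,oo)
  (breakpoints locally finite in (0,oo)) with slopes in H_p and f(p x) = f(x).\<close>
definition inK :: "nat \<Rightarrow> (real \<Rightarrow> real) \<Rightarrow> bool" where
  "inK p f \<longleftrightarrow> continuous_on {0<..} f \<and> (\<forall>x>0. f (real p * x) = f x) \<and>
     (\<exists>B. B \<subseteq> {0<..} \<and> (\<forall>a b. 0 < a \<longrightarrow> finite (B \<inter> {a..b})) \<and>
        (\<forall>a b. 0 < a \<longrightarrow> a < b \<longrightarrow> B \<inter> {a<..<b} = {} \<longrightarrow>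
           (\<exists>s\<in>Hp p. \<exists>c. \<forall>x\<in>{a..b}. f x = s * x + c)))"

definition OrdH :: "nat \<Rightarrow> real set \<Rightarrow> (real \<Rightarrow> real) \<Rightarrow> real" where
  "OrdH p H f = (let l = (SOME l. l > 0 \<and> H = scale l (Hp p)) in
      Lim (at_right 0) (\<lambda>e. (f ((1 + e) * l) - f l) / e)
    - Lim (at_left 0) (\<lambda>e. (f ((1 + e) * l) - f l) / e))"

definition Div :: "nat \<Rightarrow> (real set \<Rightarrow> real) set" where
  "Div p = {D. (\<forall>H\<in>Cp p. D H \<in> H) \<and> (\<forall>H. H \<notin> Cp p \<longrightarrow> D H = 0)
              \<and> finite {H \<in> Cp p. D H \<noteq> 0}}"

definition principal_div :: "nat \<Rightarrow> (real \<Rightarrow> real) \<Rightarrow> real set \<Rightarrow> real" where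
  "principal_div p f H = (if H \<in> Cp p then OrdH p H f else 0)"

definition chiDiv :: "nat \<Rightarrow> (real set \<Rightarrow> real) \<Rightarrow> int" where
  "chiDiv p D = (\<Sum>H\<in>{H \<in> Cp p. D H \<noteq> 0}. chiH p H (D H)) mod (int p - 1)"

end

theory Submission
  imports Defs
begin

text \<open>
  (i) The positive units of \<open>\<int>[1/p]\<close> are the powers of \<open>p\<close>, and \<open>p \<equiv> 1\<close> modulo \<open>p - 1\<close>;
  hence \<open>\<chi>(x/\<lambda>)\<close> does not depend on the choice of \<open>\<lambda>\<close> with \<open>H = \<lambda>H\<^sub>p\<close>.

  (ii) For \<open>f \<in> K(C\<^sub>p)\<close> the order of \<open>f\<close> at \<open>\<lambda>H\<^sub>p\<close> is \<open>\<lambda> J(\<lambda>)\<close>, where \<open>J\<close> is the jump of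
  the slope of \<open>f\<close>; periodicity \<open>f(p x) = f(x)\<close> gives \<open>J(p x) = J(x)/p\<close>, so the order does
  not depend on \<open>\<lambda>\<close> and the class of \<open>r \<in> [1,p)\<close> contributes \<open>\<chi>(J(r))\<close>. The sum of the
  jumps over \<open>[1,p)\<close> telescopes to \<open>f'\<^sub>-(p) - f'\<^sub>-(1) = f'\<^sub>-(1)/p - f'\<^sub>-(1)\<close>, which lies
  in \<open>(p - 1)H\<^sub>p\<close>.
\<close>

lemma mem_Hp_iff: "x \<in> Hp p \<longleftrightarrow> (\<exists>a n. x = of_int a / real p ^ n)"
  by (simp add: Hp_def)

lemma mod_pred_mult_power:
  fixes a q :: int
  shows "(a * q ^ m) mod (q - 1) = a mod (q - 1)"
proof -
  have "q mod (q - 1) = 1 mod (q - 1)"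
    by (metis add.commute diff_add_cancel mod_add_self1)
  then have "q ^ m mod (q - 1) = 1 mod (q - 1)"
    by (metis power_mod power_one)
  then show ?thesis
    by (metis mod_mult_right_eq mult.right_neutral)
qed

lemma chi_frac:
  assumes "0 < p"
  shows "chi p (of_int a / real p ^ n) = a mod (int p - 1)"
  unfolding chi_def
proof (rule the_equality)
  fix r assume "\<exists>b m. of_int a / real p ^ n = of_int b / real p ^ m \<and> r = b mod (int p - 1)"
  then obtain b m where eq: "of_int a / real p ^ n = of_int b / real p ^ m" and r: "r = b mod (int p - 1)"
    by blast
  have "real_of_int (a * int p ^ m) = real_of_int (b * int p ^ n)"
    using eq assms by (simp add: field_simps)
  then have "a * int p ^ m = b * int p ^ n"
    by (rule of_int_eq_iff[THEN iffD1])
  then show "r = a mod (int p - 1)"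
    using r mod_pred_mult_power[of a "int p" m] mod_pred_mult_power[of b "int p" n] by simp
qed blast

lemma Hp_zero: "0 \<in> Hp p"
  unfolding mem_Hp_iff by (rule exI[of _ 0], rule exI[of _ 0]) simp

lemma Hp_one: "1 \<in> Hp p"
  unfolding mem_Hp_iff by (rule exI[of _ 1], rule exI[of _ 0]) simp

lemma chi_zero: "0 < p \<Longrightarrow> chi p 0 = 0"
  using chi_frac[of p 0 0] by simp

lemma Hp_uminus: "x \<in> Hp p \<Longrightarrow> - x \<in> Hp p"
  unfolding mem_Hp_iff by (metis minus_divide_left of_int_minus)

lemma Hp_add_chi_add:
  assumes "0 < p" "x \<in> Hp p" "y \<in> Hp p"
  shows "x + y \<in> Hp p \<and> chi p (x + y) = (chi p x + chi p y) mod (int p - 1)"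
proof -
  obtain a n b m where x: "x = of_int a / real p ^ n" and y: "y = of_int b / real p ^ m"
    using assms(2,3) by (auto simp: mem_Hp_iff)
  have sum: "x + y = of_int (a * int p ^ m + b * int p ^ n) / real p ^ (n + m)"
    using assms(1) by (simp add: x y field_simps power_add)
  have "chi p (x + y) = (a * int p ^ m + b * int p ^ n) mod (int p - 1)"
    unfolding sum by (rule chi_frac[OF assms(1)])
  also have "\<dots> = (a + b) mod (int p - 1)"
    by (metis mod_add_cong mod_pred_mult_power)
  also have "\<dots> = (chi p x + chi p y) mod (int p - 1)"
    unfolding x y chi_frac[OF assms(1)] by (simp add: mod_add_eq)
  finally have "chi p (x + y) = (chi p x + chi p y) mod (int p - 1)" .
  moreover have "x + y \<in> Hp p"
    unfolding sum mem_Hp_iff by blast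
  ultimately show ?thesis by blast
qed

lemma Hp_add: "0 < p \<Longrightarrow> x \<in> Hp p \<Longrightarrow> y \<in> Hp p \<Longrightarrow> x + y \<in> Hp p"
  using Hp_add_chi_add by blast

lemma chi_add: "0 < p \<Longrightarrow> x \<in> Hp p \<Longrightarrow> y \<in> Hp p \<Longrightarrow> chi p (x + y) = (chi p x + chi p y) mod (int p - 1)"
  using Hp_add_chi_add by blast

lemma Hp_diff: "0 < p \<Longrightarrow> x \<in> Hp p \<Longrightarrow> y \<in> Hp p \<Longrightarrow> x - y \<in> Hp p"
  using Hp_add[of p x "- y"] Hp_uminus by simp

lemma Hp_sum_chi_sum:
  assumes "0 < p" "finite K" "\<And>r. r \<in> K \<Longrightarrow> g r \<in> Hp p"
  shows "(\<Sum>r\<in>K. g r) \<in> Hp p \<and> chi p (\<Sum>r\<in>K. g r) = (\<Sum>r\<in>K. chi p (g r)) mod (int p - 1)"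
  using assms(2,3)
proof (induction K rule: finite_induct)
  case empty
  show ?case using chi_zero[OF assms(1)] Hp_zero by simp
next
  case (insert x F)
  then have IH: "(\<Sum>r\<in>F. g r) \<in> Hp p" "chi p (\<Sum>r\<in>F. g r) = (\<Sum>r\<in>F. chi p (g r)) mod (int p - 1)"
    and gx: "g x \<in> Hp p" by auto
  show ?case
    using insert(1,2) IH Hp_add[OF assms(1) gx IH(1)] chi_add[OF assms(1) gx IH(1)]
    by (simp add: mod_add_right_eq)
qed

lemma Hp_mult_power_chi_mult_power:
  assumes "0 < p" "x \<in> Hp p"
  shows "x * real p ^ j / real p ^ n \<in> Hp p \<and> chi p (x * real p ^ j / real p ^ n) = chi p x"
proof -
  obtain a m where x: "x = of_int a / real p ^ m"
    using assms(2) by (auto simp: mem_Hp_iff)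
  have eq: "x * real p ^ j / real p ^ n = of_int (a * int p ^ j) / real p ^ (m + n)"
    using assms(1) by (simp add: x field_simps power_add)
  have "chi p (x * real p ^ j / real p ^ n) = chi p x"
    unfolding eq chi_frac[OF assms(1)] unfolding x chi_frac[OF assms(1)]
    by (rule mod_pred_mult_power)
  moreover have "x * real p ^ j / real p ^ n \<in> Hp p"
    unfolding eq mem_Hp_iff by blast
  ultimately show ?thesis by blast
qed

lemma Hp_mult_power: "0 < p \<Longrightarrow> x \<in> Hp p \<Longrightarrow> x * real p ^ j / real p ^ n \<in> Hp p"
  using Hp_mult_power_chi_mult_power by blast

lemma chi_mult_power: "0 < p \<Longrightarrow> x \<in> Hp p \<Longrightarrow> chi p (x * real p ^ j / real p ^ n) = chi p x"
  using Hp_mult_power_chi_mult_power by blast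

lemma chi_divide_diff_eq_0:
  assumes "0 < p" "x \<in> Hp p"
  shows "chi p (x / real p - x) = 0"
proof -
  obtain a n where x: "x = of_int a / real p ^ n"
    using assms(2) by (auto simp: mem_Hp_iff)
  have "x / real p - x = of_int (- a * (int p - 1)) / real p ^ Suc n"
    using assms(1) by (simp add: x field_simps)
  then show ?thesis
    by (simp only: chi_frac[OF assms(1)]) simp
qed

lemma scale_Hp_mult_power:
  assumes "0 < p"
  shows "scale (r * real p ^ j / real p ^ n) (Hp p) = scale r (Hp p)"
proof
  show "scale (r * real p ^ j / real p ^ n) (Hp p) \<subseteq> scale r (Hp p)"
  proof
    fix x assume "x \<in> scale (r * real p ^ j / real p ^ n) (Hp p)"
    then obtain h where h: "h \<in> Hp p" "x = r * real p ^ j / real p ^ n * h"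
      by (auto simp: scale_def)
    then have "x = r * (h * real p ^ j / real p ^ n)" by simp
    with Hp_mult_power[OF assms h(1)] show "x \<in> scale r (Hp p)"
      unfolding scale_def by blast
  qed
next
  show "scale r (Hp p) \<subseteq> scale (r * real p ^ j / real p ^ n) (Hp p)"
  proof
    fix x assume "x \<in> scale r (Hp p)"
    then obtain h where h: "h \<in> Hp p" "x = r * h"
      by (auto simp: scale_def)
    then have "x = r * real p ^ j / real p ^ n * (h * real p ^ n / real p ^ j)"
      using assms by simp
    with Hp_mult_power[OF assms h(1)] show "x \<in> scale (r * real p ^ j / real p ^ n) (Hp p)"
      unfolding scale_def by blast
  qed
qed

text \<open>The positive units of \<open>\<int>[1/p]\<close> are the powers \<open>p\<^sup>k\<close>, \<open>k \<in> \<int>\<close>.\<close>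

lemma scale_Hp_eq_imp_mult_power:
  assumes p: "prime p" and "0 < l" "0 < r" and eq: "scale l (Hp p) = scale r (Hp p)"
  shows "\<exists>j n. l = r * real p ^ j / real p ^ n"
proof -
  have p_pos: "0 < p" using p prime_gt_0_nat by blast
  have self_mem: "x \<in> scale x (Hp p)" for x
    using Hp_one[of p] unfolding scale_def by force
  have "l \<in> scale r (Hp p)" "r \<in> scale l (Hp p)"
    using self_mem eq by auto
  then obtain h h' where "h \<in> Hp p" "l = r * h" "h' \<in> Hp p" "r = l * h'"
    unfolding scale_def by blast
  then obtain a n b m where a: "l = r * (of_int a / real p ^ n)" and b: "r = l * (of_int b / real p ^ m)"
    unfolding mem_Hp_iff by blast
  have "of_int a * of_int b = real p ^ n * real p ^ m"
    using a b \<open>0 < l\<close> p_pos by (simp add: field_simps)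
  then have ab: "a * b = int (p ^ (n + m))"
    by (metis of_int_eq_iff of_int_mult of_int_of_nat_eq of_nat_power power_add)
  have "0 < a"
    using a \<open>0 < l\<close> \<open>0 < r\<close> p_pos by (simp add: zero_less_mult_iff zero_less_divide_iff)
  moreover have "0 < a * b"
    using ab p_pos by simp
  ultimately have "nat a dvd p ^ (n + m)"
    using ab by (metis dvd_triv_left nat_int nat_mult_distrib order_less_imp_le zero_less_mult_pos)
  then obtain i where "nat a = p ^ i"
    using divides_primepow_nat[OF p] by blast
  with \<open>0 < a\<close> have "l = r * real p ^ i / real p ^ n"
    using a by (metis of_int_of_nat_eq of_nat_power pos_int_cases nat_int times_divide_eq_right)
  then show ?thesis by blast
qed

lemma mult_power_in_fundamental_domain:
  assumes "1 < p" "0 < l"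
  shows "\<exists>j n. l * real p ^ j / real p ^ n \<in> {1..<real p}"
proof -
  have p1: "1 < real p" using assms by simp
  obtain j where "1 / l < real p ^ j"
    using real_arch_pow[OF p1] by blast
  then have j: "1 \<le> l * real p ^ j"
    using assms(2) by (simp add: field_simps)
  obtain k where k: "l * real p ^ j < real p ^ k"
    using real_arch_pow[OF p1] by blast
  have "\<exists>n. l * real p ^ j / real p ^ n < real p"
  proof
    show "l * real p ^ j / real p ^ k < real p"
      using k p1 by (simp add: divide_less_eq less_le_trans)
  qed
  then obtain n where n: "l * real p ^ j / real p ^ n < real p"
    and least: "\<And>m. m < n \<Longrightarrow> \<not> l * real p ^ j / real p ^ m < real p"
    unfolding exists_least_iff[of "\<lambda>n. l * real p ^ j / real p ^ n < real p"] by blast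
  have "1 \<le> l * real p ^ j / real p ^ n"
  proof (cases n)
    case 0
    then show ?thesis using j by simp
  next
    case (Suc m)
    then have "real p \<le> l * real p ^ j / real p ^ m"
      using least[of m] by simp
    then show ?thesis
      using Suc p1 by (simp add: field_simps)
  qed
  with n show ?thesis by (metis atLeastLessThan_iff)
qed

lemma mult_power_in_fundamental_domain_unique:
  assumes "1 < p" and r: "r \<in> {1..<real p}" and rjn: "r * real p ^ j / real p ^ n \<in> {1..<real p}"
  shows "r * real p ^ j / real p ^ n = r"
proof -
  have p1: "1 < real p" using assms by simp
  have "j = n"
  proof (rule ccontr)
    assume "j \<noteq> n"
    then consider "n < j" | "j < n" by linarith
    then show False
    proof cases
      case 1
      then have "real p \<le> real p ^ (j - n)"
        using p1 power_increasing[of 1 "j - n" "real p"] by simp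
      then have "1 * real p \<le> r * real p ^ (j - n)"
        using r by (intro mult_mono) auto
      also have "\<dots> = r * real p ^ j / real p ^ n"
        using 1 p1 by (simp add: power_diff)
      finally show False using rjn by simp
    next
      case 2
      then have "real p \<le> real p ^ (n - j)"
        using p1 power_increasing[of 1 "n - j" "real p"] by simp
      then have "r < real p ^ (n - j)"
        using r by (simp only: atLeastLessThan_iff) linarith
      then have "r / real p ^ (n - j) < 1"
        using p1 by simp
      also have "r / real p ^ (n - j) = r * real p ^ j / real p ^ n"
        using 2 p1 by (simp add: power_diff)
      finally show False using rjn by simp
    qed
  qed
  then show ?thesis using p1 by simp
qed

lemma bij_betw_scale_Cp:
  assumes p: "prime p"
  shows "bij_betw (\<lambda>r. scale r (Hp p)) {1..<real p} (Cp p)"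
proof -
  have p1: "1 < p" using p prime_gt_1_nat by blast
  have "inj_on (\<lambda>r. scale r (Hp p)) {1..<real p}"
  proof (rule inj_onI)
    fix r r' assume r: "r \<in> {1..<real p}" and r': "r' \<in> {1..<real p}"
      and eq: "scale r (Hp p) = scale r' (Hp p)"
    then obtain j n where jn: "r' = r * real p ^ j / real p ^ n"
      using scale_Hp_eq_imp_mult_power[OF p, of r' r] by auto
    have "r * real p ^ j / real p ^ n = r"
      using mult_power_in_fundamental_domain_unique[OF p1 r] r' jn by blast
    with jn show "r = r'" by simp
  qed
  moreover have "(\<lambda>r. scale r (Hp p)) ` {1..<real p} = Cp p"
  proof
    show "(\<lambda>r. scale r (Hp p)) ` {1..<real p} \<subseteq> Cp p"
      unfolding Cp_def by auto
  next
    show "Cp p \<subseteq> (\<lambda>r. scale r (Hp p)) ` {1..<real p}"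
    proof
      fix H assume "H \<in> Cp p"
      then obtain l where l: "0 < l" "H = scale l (Hp p)"
        unfolding Cp_def by blast
      obtain j n where "l * real p ^ j / real p ^ n \<in> {1..<real p}"
        using mult_power_in_fundamental_domain[OF p1 l(1)] by blast
      moreover have "H = scale (l * real p ^ j / real p ^ n) (Hp p)"
        using l(2) scale_Hp_mult_power p1 by simp
      ultimately show "H \<in> (\<lambda>r. scale r (Hp p)) ` {1..<real p}" by blast
    qed
  qed
  ultimately show ?thesis unfolding bij_betw_def by blast
qed

lemma chi_divide_scale_eq:
  assumes p: "prime p" and "0 < l" "0 < r" and eq: "scale l (Hp p) = scale r (Hp p)"
    and x: "x \<in> scale l (Hp p)"
  shows "chi p (x / r) = chi p (x / l)"
proof -
  have p_pos: "0 < p" using p prime_gt_0_nat by blast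
  obtain j n where r: "r = l * real p ^ j / real p ^ n"
    using scale_Hp_eq_imp_mult_power[OF p \<open>0 < r\<close> \<open>0 < l\<close> eq[symmetric]] by blast
  obtain h where h: "h \<in> Hp p" "x = l * h"
    using x unfolding scale_def by blast
  have "x / r = h * real p ^ n / real p ^ j"
    unfolding r h(2) using \<open>0 < l\<close> p_pos by (simp add: field_simps)
  then show ?thesis
    using h \<open>0 < l\<close> chi_mult_power[OF p_pos h(1)] by simp
qed

text \<open>The scale factor that \<^const>\<open>chiH\<close> and \<^const>\<open>OrdH\<close> pick by Hilbert choice.\<close>

definition Cp_scale :: "nat \<Rightarrow> real set \<Rightarrow> real" where
  "Cp_scale p H = (SOME l. 0 < l \<and> H = scale l (Hp p))"

lemma Cp_scale:
  assumes "H \<in> Cp p"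
  shows "0 < Cp_scale p H \<and> H = scale (Cp_scale p H) (Hp p)"
proof -
  have "\<exists>l. 0 < l \<and> H = scale l (Hp p)"
    using assms unfolding Cp_def by blast
  then show ?thesis
    unfolding Cp_scale_def by (rule someI_ex)
qed

lemma scale_in_Cp: "0 < l \<Longrightarrow> scale l (Hp p) \<in> Cp p"
  unfolding Cp_def by blast

lemma chiH_scale:
  assumes p: "prime p" and "0 < r" "x \<in> Hp p"
  shows "chiH p (scale r (Hp p)) (r * x) = chi p x"
proof -
  let ?H = "scale r (Hp p)"
  have l: "0 < Cp_scale p ?H" "?H = scale (Cp_scale p ?H) (Hp p)"
    using Cp_scale[OF scale_in_Cp[OF \<open>0 < r\<close>]] by auto
  have "r * x \<in> ?H"
    using assms(3) unfolding scale_def by blast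
  then have "chi p (r * x / Cp_scale p ?H) = chi p (r * x / r)"
    using chi_divide_scale_eq[OF p \<open>0 < r\<close> l(1) l(2)] by simp
  then show ?thesis
    using \<open>0 < r\<close> by (simp add: chiH_def Cp_scale_def)
qed

lemma ex1_chi_on_Cp:
  assumes p: "prime p" and H: "H \<in> Cp p"
  shows "\<exists>!g. g \<in> extensional H \<and> (\<forall>l>0. H = scale l (Hp p) \<longrightarrow> (\<forall>x\<in>H. g x = chi p (x / l)))"
proof -
  obtain l0 where l0: "0 < l0" "H = scale l0 (Hp p)"
    using H unfolding Cp_def by blast
  let ?g = "restrict (\<lambda>x. chi p (x / l0)) H"
  have "\<forall>l>0. H = scale l (Hp p) \<longrightarrow> (\<forall>x\<in>H. ?g x = chi p (x / l))"
  proof (intro allI impI ballI)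
    fix l x assume "0 < l" "H = scale l (Hp p)" "x \<in> H"
    then show "?g x = chi p (x / l)"
      using chi_divide_scale_eq[OF p l0(1) \<open>0 < l\<close>] l0(2) by simp
  qed
  moreover have "g = ?g"
    if "g \<in> extensional H" "\<forall>l>0. H = scale l (Hp p) \<longrightarrow> (\<forall>x\<in>H. g x = chi p (x / l))" for g
    using that l0 by (intro extensionalityI[of _ H]) auto
  ultimately show ?thesis
    by (intro ex1I[of _ ?g]) auto
qed

definition has_right_slope :: "(real \<Rightarrow> real) \<Rightarrow> real \<Rightarrow> real \<Rightarrow> bool" where
  "has_right_slope f s x \<longleftrightarrow> (\<exists>d>0. \<forall>y\<in>{x..x+d}. f y = f x + s * (y - x))"

definition has_left_slope :: "(real \<Rightarrow> real) \<Rightarrow> real \<Rightarrow> real \<Rightarrow> bool" where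
  "has_left_slope f s x \<longleftrightarrow> (\<exists>d>0. \<forall>y\<in>{x-d..x}. f y = f x + s * (y - x))"

definition right_slope :: "(real \<Rightarrow> real) \<Rightarrow> real \<Rightarrow> real" where
  "right_slope f x = (THE s. has_right_slope f s x)"

definition left_slope :: "(real \<Rightarrow> real) \<Rightarrow> real \<Rightarrow> real" where
  "left_slope f x = (THE s. has_left_slope f s x)"

definition slope_jump :: "(real \<Rightarrow> real) \<Rightarrow> real \<Rightarrow> real" where
  "slope_jump f x = right_slope f x - left_slope f x"

lemma right_slope_eqI:
  assumes "has_right_slope f s x"
  shows "right_slope f x = s"
  unfolding right_slope_def
proof (rule the_equality)
  fix s' assume "has_right_slope f s' x"
  then obtain d' where "0 < d'" and d': "\<forall>y\<in>{x..x+d'}. f y = f x + s' * (y - x)"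
    unfolding has_right_slope_def by blast
  obtain d where "0 < d" and d: "\<forall>y\<in>{x..x+d}. f y = f x + s * (y - x)"
    using assms unfolding has_right_slope_def by blast
  define m where "m = min d d'"
  have "0 < m" and m: "x + m \<in> {x..x+d}" "x + m \<in> {x..x+d'}"
    using \<open>0 < d\<close> \<open>0 < d'\<close> by (simp_all add: m_def)
  have "s' * m = s * m"
    using bspec[OF d m(1)] bspec[OF d' m(2)] by simp
  with \<open>0 < m\<close> show "s' = s" by simp
qed (fact assms)

lemma left_slope_eqI:
  assumes "has_left_slope f s x"
  shows "left_slope f x = s"
  unfolding left_slope_def
proof (rule the_equality)
  fix s' assume "has_left_slope f s' x"
  then obtain d' where "0 < d'" and d': "\<forall>y\<in>{x-d'..x}. f y = f x + s' * (y - x)"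
    unfolding has_left_slope_def by blast
  obtain d where "0 < d" and d: "\<forall>y\<in>{x-d..x}. f y = f x + s * (y - x)"
    using assms unfolding has_left_slope_def by blast
  define m where "m = min d d'"
  have "0 < m" and m: "x - m \<in> {x-d..x}" "x - m \<in> {x-d'..x}"
    using \<open>0 < d\<close> \<open>0 < d'\<close> by (simp_all add: m_def)
  have "s' * m = s * m"
    using bspec[OF d m(1)] bspec[OF d' m(2)] by simp
  with \<open>0 < m\<close> show "s' = s" by simp
qed (fact assms)

lemma affine_has_right_slope:
  assumes "\<forall>y\<in>{a..b}. f y = s * y + c" "a \<le> x" "x < b"
  shows "has_right_slope f s x"
  unfolding has_right_slope_def
proof (intro exI conjI ballI)
  fix y assume "y \<in> {x..x + (b - x)}"
  then show "f y = f x + s * (y - x)"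
    using assms by (simp add: algebra_simps)
qed (use assms in simp)

lemma affine_has_left_slope:
  assumes "\<forall>y\<in>{a..b}. f y = s * y + c" "a < x" "x \<le> b"
  shows "has_left_slope f s x"
  unfolding has_left_slope_def
proof (intro exI conjI ballI)
  fix y assume "y \<in> {x - (x - a)..x}"
  then show "f y = f x + s * (y - x)"
    using assms by (simp add: algebra_simps)
qed (use assms in simp)

lemma Lim_at_right_difference_quotient:
  assumes "0 < x" "has_right_slope f s x"
  shows "Lim (at_right 0) (\<lambda>e. (f ((1 + e) * x) - f x) / e) = x * s"
proof -
  obtain d where "0 < d" and d: "\<forall>y\<in>{x..x+d}. f y = f x + s * (y - x)"
    using assms(2) unfolding has_right_slope_def by blast
  have "eventually (\<lambda>e. (f ((1 + e) * x) - f x) / e = x * s) (at_right 0)"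
    unfolding eventually_at_right_field
  proof (intro exI conjI allI impI)
    fix e :: real assume e: "0 < e" "e < d / x"
    then have "(1 + e) * x \<in> {x..x+d}"
      using assms(1) by (simp add: field_simps)
    then have "f ((1 + e) * x) = f x + s * ((1 + e) * x - x)"
      using d by blast
    then show "(f ((1 + e) * x) - f x) / e = x * s"
      using e(1) by (simp add: field_simps)
  qed (use \<open>0 < d\<close> assms(1) in simp)
  then show ?thesis
    by (intro tendsto_Lim) (simp_all add: tendsto_eventually)
qed

lemma Lim_at_left_difference_quotient:
  assumes "0 < x" "has_left_slope f s x"
  shows "Lim (at_left 0) (\<lambda>e. (f ((1 + e) * x) - f x) / e) = x * s"
proof -
  obtain d where "0 < d" and d: "\<forall>y\<in>{x-d..x}. f y = f x + s * (y - x)"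
    using assms(2) unfolding has_left_slope_def by blast
  have "eventually (\<lambda>e. (f ((1 + e) * x) - f x) / e = x * s) (at_left 0)"
    unfolding eventually_at_left_field
  proof (intro exI conjI allI impI)
    fix e :: real assume e: "- d / x < e" "e < 0"
    then have "(1 + e) * x \<in> {x-d..x}"
      using assms(1) by (simp add: field_simps mult_nonpos_nonneg)
    then have "f ((1 + e) * x) = f x + s * ((1 + e) * x - x)"
      using d by blast
    then show "(f ((1 + e) * x) - f x) / e = x * s"
      using e(2) by (simp add: field_simps)
  qed (use \<open>0 < d\<close> assms(1) in simp)
  then show ?thesis
    by (intro tendsto_Lim) (simp_all add: tendsto_eventually)
qed

locale piecewise_affine =
  fixes p :: nat and f :: "real \<Rightarrow> real" and B :: "real set"
  assumes p_pos: "0 < p"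
    and breaks_finite: "\<And>a b. 0 < a \<Longrightarrow> finite (B \<inter> {a..b})"
    and affine_between_breaks: "\<And>a b. 0 < a \<Longrightarrow> a < b \<Longrightarrow> B \<inter> {a<..<b} = {} \<Longrightarrow>
           \<exists>s\<in>Hp p. \<exists>c. \<forall>x\<in>{a..b}. f x = s * x + c"
begin

lemma breaks_isolated:
  assumes "0 < x"
  obtains d where "0 < d" "d < x" "B \<inter> {x-d<..<x+d} \<subseteq> {x}"
proof -
  obtain \<delta> where "0 < \<delta>" and \<delta>: "\<forall>y\<in>B \<inter> {x/2..2*x}. y \<noteq> x \<longrightarrow> \<delta> \<le> dist x y"
    using finite_set_avoid[OF breaks_finite, of "x/2" "2*x" x] assms by auto
  have "B \<inter> {x - min \<delta> (x/2)<..<x + min \<delta> (x/2)} \<subseteq> {x}"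
  proof
    fix y assume y: "y \<in> B \<inter> {x - min \<delta> (x/2)<..<x + min \<delta> (x/2)}"
    then have "dist x y < \<delta>" "y \<in> B \<inter> {x/2..2*x}"
      using assms by (auto simp: dist_real_def)
    with \<delta> show "y \<in> {x}" by force
  qed
  then show ?thesis
    using that[of "min \<delta> (x/2)"] \<open>0 < \<delta>\<close> assms by simp
qed

lemma ex_has_right_slope:
  assumes "0 < x"
  shows "\<exists>s\<in>Hp p. has_right_slope f s x"
proof -
  obtain d where "0 < d" "d < x" "B \<inter> {x-d<..<x+d} \<subseteq> {x}"
    using breaks_isolated[OF assms] .
  then have "B \<inter> {x<..<x+d} = {}" by auto
  then obtain s c where "s \<in> Hp p" "\<forall>y\<in>{x..x+d}. f y = s * y + c"
    using affine_between_breaks[of x "x+d"] assms \<open>0 < d\<close> by auto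
  then show ?thesis
    using affine_has_right_slope[of x "x+d" f s c x] \<open>0 < d\<close> by auto
qed

lemma ex_has_left_slope:
  assumes "0 < x"
  shows "\<exists>s\<in>Hp p. has_left_slope f s x"
proof -
  obtain d where "0 < d" "d < x" "B \<inter> {x-d<..<x+d} \<subseteq> {x}"
    using breaks_isolated[OF assms] .
  then have "B \<inter> {x-d<..<x} = {}" by auto
  then obtain s c where "s \<in> Hp p" "\<forall>y\<in>{x-d..x}. f y = s * y + c"
    using affine_between_breaks[of "x-d" x] \<open>0 < d\<close> \<open>d < x\<close> by auto
  then show ?thesis
    using affine_has_left_slope[of "x-d" x f s c x] \<open>0 < d\<close> by auto
qed

lemma has_right_slope_right_slope: "0 < x \<Longrightarrow> has_right_slope f (right_slope f x) x"
  using ex_has_right_slope right_slope_eqI by metis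

lemma has_left_slope_left_slope: "0 < x \<Longrightarrow> has_left_slope f (left_slope f x) x"
  using ex_has_left_slope left_slope_eqI by metis

lemma right_slope_in_Hp: "0 < x \<Longrightarrow> right_slope f x \<in> Hp p"
  using ex_has_right_slope right_slope_eqI by metis

lemma left_slope_in_Hp: "0 < x \<Longrightarrow> left_slope f x \<in> Hp p"
  using ex_has_left_slope left_slope_eqI by metis

lemma slope_jump_in_Hp: "0 < x \<Longrightarrow> slope_jump f x \<in> Hp p"
  unfolding slope_jump_def by (intro Hp_diff p_pos right_slope_in_Hp left_slope_in_Hp)

lemma right_slope_eq_left_slope:
  assumes "0 < a" "a < b" "B \<inter> {a<..<b} = {}"
  shows "right_slope f a = left_slope f b"
proof -
  obtain s c where aff: "\<forall>y\<in>{a..b}. f y = s * y + c"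
    using affine_between_breaks[OF assms] by blast
  have "right_slope f a = s"
    by (rule right_slope_eqI[OF affine_has_right_slope[OF aff order_refl assms(2)]])
  moreover have "left_slope f b = s"
    by (rule left_slope_eqI[OF affine_has_left_slope[OF aff assms(2) order_refl]])
  ultimately show ?thesis by simp
qed

lemma slope_jump_eq_0:
  assumes "0 < x" "x \<notin> B"
  shows "slope_jump f x = 0"
proof -
  obtain d where "0 < d" "d < x" "B \<inter> {x-d<..<x+d} \<subseteq> {x}"
    using breaks_isolated[OF assms(1)] .
  then have "B \<inter> {x-d<..<x+d} = {}" using assms(2) by auto
  then obtain s c where aff: "\<forall>y\<in>{x-d..x+d}. f y = s * y + c"
    using affine_between_breaks[of "x-d" "x+d"] \<open>0 < d\<close> \<open>d < x\<close> by auto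
  have "x - d \<le> x" "x < x + d" "x - d < x" "x \<le> x + d"
    using \<open>0 < d\<close> by simp_all
  then have "right_slope f x = s" "left_slope f x = s"
    using right_slope_eqI[OF affine_has_right_slope[OF aff]]
      left_slope_eqI[OF affine_has_left_slope[OF aff]] by blast+
  then show ?thesis unfolding slope_jump_def by simp
qed

lemma left_slope_telescope:
  assumes "0 < a" "a < b"
  shows "left_slope f b - left_slope f a = (\<Sum>r\<in>B \<inter> {a..<b}. slope_jump f r)"
proof -
  have "\<forall>a b. 0 < a \<longrightarrow> a < b \<longrightarrow> card (B \<inter> {a<..<b}) = n \<longrightarrow>
          left_slope f b - left_slope f a = (\<Sum>r\<in>B \<inter> {a..<b}. slope_jump f r)" for n
  proof (induction n rule: less_induct)
    case (less n)
    show ?case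
    proof (intro allI impI)
      fix a b :: real assume ab: "0 < a" "a < b" and n: "card (B \<inter> {a<..<b}) = n"
      have fin: "finite (B \<inter> {a..b})"
        using breaks_finite ab(1) by blast
      show "left_slope f b - left_slope f a = (\<Sum>r\<in>B \<inter> {a..<b}. slope_jump f r)"
      proof (cases "B \<inter> {a<..<b} = {}")
        case True
        have "left_slope f b - left_slope f a = slope_jump f a"
          using right_slope_eq_left_slope[OF ab True] by (simp add: slope_jump_def)
        moreover have "B \<inter> {a..<b} = (if a \<in> B then {a} else {})"
          using True ab by (auto simp: le_less)
        ultimately show ?thesis
          using slope_jump_eq_0[OF ab(1)] by simp
      next
        case False
        then obtain c where c: "c \<in> B" "a < c" "c < b" by auto
        have "card (B \<inter> {a<..<c}) < n" "card (B \<inter> {c<..<b}) < n"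
          using n c by (auto intro!: psubset_card_mono finite_subset[OF _ fin])
        then have "left_slope f c - left_slope f a = (\<Sum>r\<in>B \<inter> {a..<c}. slope_jump f r)"
          "left_slope f b - left_slope f c = (\<Sum>r\<in>B \<inter> {c..<b}. slope_jump f r)"
          using less.IH ab c by auto
        moreover have "B \<inter> {a..<b} = (B \<inter> {a..<c}) \<union> (B \<inter> {c..<b})"
          using c by auto
        then have "(\<Sum>r\<in>B \<inter> {a..<b}. slope_jump f r)
            = (\<Sum>r\<in>B \<inter> {a..<c}. slope_jump f r) + (\<Sum>r\<in>B \<inter> {c..<b}. slope_jump f r)"
          by (simp only:) (rule sum.union_disjoint; use c in \<open>auto intro: finite_subset[OF _ fin]\<close>)
        ultimately show ?thesis by linarith
      qed
    qed
  qed
  then show ?thesis using assms by blast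
qed

lemma OrdH_eq_slope_jump:
  assumes "H \<in> Cp p"
  shows "OrdH p H f = Cp_scale p H * slope_jump f (Cp_scale p H)"
proof -
  have l: "0 < Cp_scale p H" using Cp_scale[OF assms] by blast
  show ?thesis
    unfolding OrdH_def Let_def Cp_scale_def[symmetric] slope_jump_def
    using Lim_at_right_difference_quotient[OF l has_right_slope_right_slope[OF l]]
      Lim_at_left_difference_quotient[OF l has_left_slope_left_slope[OF l]]
    by (simp add: right_diff_distrib)
qed

end

locale periodic_piecewise_affine = piecewise_affine +
  assumes prime: "prime p"
    and periodic: "\<And>x. 0 < x \<Longrightarrow> f (real p * x) = f x"
begin

lemma has_right_slope_mult:
  assumes "0 < x" "has_right_slope f s x"
  shows "has_right_slope f (s / p) (real p * x)"
proof -
  obtain d where "0 < d" and d: "\<forall>y\<in>{x..x+d}. f y = f x + s * (y - x)"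
    using assms(2) unfolding has_right_slope_def by blast
  have "\<forall>y\<in>{p*x..p*x + p*d}. f y = f (p*x) + s / p * (y - p*x)"
  proof
    fix y assume "y \<in> {p*x..p*x + p*d}"
    then have y: "y / p \<in> {x..x+d}"
      using p_pos by (auto simp: field_simps)
    then have "f y = f (y / p)"
      using periodic[of "y / p"] assms(1) p_pos by simp
    also have "\<dots> = f x + s * (y / p - x)"
      using bspec[OF d y] .
    also have "\<dots> = f (p*x) + s / p * (y - p*x)"
      using periodic[OF assms(1)] p_pos by (simp add: field_simps)
    finally show "f y = f (p*x) + s / p * (y - p*x)" .
  qed
  moreover have "0 < p * d"
    using \<open>0 < d\<close> p_pos by simp
  ultimately show ?thesis
    unfolding has_right_slope_def by blast
qed

lemma has_left_slope_mult:
  assumes "0 < x" "has_left_slope f s x"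
  shows "has_left_slope f (s / p) (real p * x)"
proof -
  obtain d0 where "0 < d0" and d0: "\<forall>y\<in>{x-d0..x}. f y = f x + s * (y - x)"
    using assms(2) unfolding has_left_slope_def by blast
  define d where "d = min d0 (x/2)"
  have "0 < d" "d < x" "d \<le> d0"
    using \<open>0 < d0\<close> assms(1) by (simp_all add: d_def)
  have "\<forall>y\<in>{p*x - p*d..p*x}. f y = f (p*x) + s / p * (y - p*x)"
  proof
    fix y assume "y \<in> {p*x - p*d..p*x}"
    then have y: "y / p \<in> {x-d..x}"
      using p_pos by (auto simp: field_simps)
    then have "f y = f (y / p)"
      using periodic[of "y / p"] \<open>d < x\<close> p_pos by simp
    also have "\<dots> = f x + s * (y / p - x)"
      using y \<open>d \<le> d0\<close> by (intro bspec[OF d0]) simp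
    also have "\<dots> = f (p*x) + s / p * (y - p*x)"
      using periodic[OF assms(1)] p_pos by (simp add: field_simps)
    finally show "f y = f (p*x) + s / p * (y - p*x)" .
  qed
  moreover have "0 < p * d"
    using \<open>0 < d\<close> p_pos by simp
  ultimately show ?thesis
    unfolding has_left_slope_def by blast
qed

lemma left_slope_mult: "0 < x \<Longrightarrow> left_slope f (real p * x) = left_slope f x / p"
  by (intro left_slope_eqI has_left_slope_mult has_left_slope_left_slope)

lemma slope_jump_mult: "0 < x \<Longrightarrow> slope_jump f (real p * x) = slope_jump f x / p"
  unfolding slope_jump_def diff_divide_distrib
  by (intro arg_cong2[where f = minus] right_slope_eqI left_slope_eqI
      has_right_slope_mult has_left_slope_mult has_right_slope_right_slope has_left_slope_left_slope)

lemma slope_jump_mult_power: "0 < x \<Longrightarrow> slope_jump f (real p ^ k * x) = slope_jump f x / p ^ k"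
  by (induction k) (simp_all add: slope_jump_mult p_pos mult.assoc)

lemma slope_jump_mult_power_divide_power:
  assumes "0 < x"
  shows "slope_jump f (x * real p ^ j / real p ^ n) = slope_jump f x * real p ^ n / real p ^ j"
proof -
  have y: "0 < x / p ^ n" using assms p_pos by simp
  have "slope_jump f x = slope_jump f (x / p ^ n) / p ^ n"
    using slope_jump_mult_power[OF y, of n] p_pos by simp
  moreover have "slope_jump f (x * real p ^ j / real p ^ n) = slope_jump f (x / p ^ n) / p ^ j"
    using slope_jump_mult_power[OF y, of j] by (simp add: field_simps)
  ultimately show ?thesis
    using p_pos by (simp add: field_simps)
qed

lemma principal_div_scale:
  assumes "0 < r"
  shows "principal_div p f (scale r (Hp p)) = r * slope_jump f r"
proof -
  let ?H = "scale r (Hp p)"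
  have H: "?H \<in> Cp p" by (rule scale_in_Cp[OF assms])
  have l: "0 < Cp_scale p ?H" "scale (Cp_scale p ?H) (Hp p) = ?H"
    using Cp_scale[OF H] by auto
  obtain j n where jn: "Cp_scale p ?H = r * real p ^ j / real p ^ n"
    using scale_Hp_eq_imp_mult_power[OF prime l(1) assms l(2)] by blast
  have "principal_div p f ?H = Cp_scale p ?H * slope_jump f (Cp_scale p ?H)"
    using H by (simp add: principal_div_def OrdH_eq_slope_jump)
  also have "\<dots> = r * slope_jump f r"
    unfolding jn slope_jump_mult_power_divide_power[OF assms] using p_pos by simp
  finally show ?thesis .
qed

lemma principal_div_support:
  "{H \<in> Cp p. principal_div p f H \<noteq> 0} = (\<lambda>r. scale r (Hp p)) ` {r \<in> {1..<real p}. slope_jump f r \<noteq> 0}"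
proof -
  have "Cp p = (\<lambda>r. scale r (Hp p)) ` {1..<real p}"
    using bij_betw_scale_Cp[OF prime] by (simp add: bij_betw_def)
  then show ?thesis
    by (auto simp: principal_div_scale)
qed

lemma slope_jump_support_subset: "{r \<in> {1..<real p}. slope_jump f r \<noteq> 0} \<subseteq> B \<inter> {1..<real p}"
proof
  fix r assume r: "r \<in> {r \<in> {1..<real p}. slope_jump f r \<noteq> 0}"
  then have "r \<in> B"
    using slope_jump_eq_0[of r] by auto
  with r show "r \<in> B \<inter> {1..<real p}" by simp
qed

lemma finite_breaks_fundamental_domain: "finite (B \<inter> {1..<real p})"
  by (rule finite_subset[OF _ breaks_finite[of 1 "real p"]]) auto

lemma finite_slope_jump_support: "finite {r \<in> {1..<real p}. slope_jump f r \<noteq> 0}"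
  by (rule finite_subset[OF slope_jump_support_subset finite_breaks_fundamental_domain])

lemma principal_div_in_Div: "principal_div p f \<in> Div p"
  unfolding Div_def
proof (intro CollectI conjI ballI allI impI)
  fix H assume "H \<in> Cp p"
  then obtain r where r: "0 < r" "H = scale r (Hp p)"
    unfolding Cp_def by blast
  show "principal_div p f H \<in> H"
    using slope_jump_in_Hp[OF r(1)] unfolding r(2) principal_div_scale[OF r(1)] unfolding scale_def by blast
next
  show "finite {H \<in> Cp p. principal_div p f H \<noteq> 0}"
    unfolding principal_div_support using finite_slope_jump_support by simp
qed (simp add: principal_div_def)

lemma chiDiv_principal_div: "chiDiv p (principal_div p f) = 0"
proof -
  define K where "K = {r \<in> {1..<real p}. slope_jump f r \<noteq> 0}"
  have p1: "1 < real p" using prime prime_gt_1_nat by simp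
  have finK: "finite K"
    unfolding K_def by (rule finite_slope_jump_support)
  have K_Hp: "slope_jump f r \<in> Hp p" if "r \<in> K" for r
    using that slope_jump_in_Hp by (simp add: K_def)
  have inj: "inj_on (\<lambda>r. scale r (Hp p)) K"
    using bij_betw_imp_inj_on[OF bij_betw_scale_Cp[OF prime]] by (rule inj_on_subset) (auto simp: K_def)
  have "chiDiv p (principal_div p f)
      = (\<Sum>r\<in>K. chiH p (scale r (Hp p)) (r * slope_jump f r)) mod (int p - 1)"
    unfolding chiDiv_def principal_div_support K_def[symmetric] sum.reindex[OF inj]
    by (simp add: K_def principal_div_scale)
  also have "\<dots> = (\<Sum>r\<in>K. chi p (slope_jump f r)) mod (int p - 1)"
    using K_Hp by (simp add: K_def chiH_scale[OF prime])
  also have "\<dots> = chi p (\<Sum>r\<in>K. slope_jump f r)"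
    using Hp_sum_chi_sum[OF p_pos finK K_Hp] by simp
  also have "(\<Sum>r\<in>K. slope_jump f r) = (\<Sum>r\<in>B \<inter> {1..<real p}. slope_jump f r)"
    using finite_breaks_fundamental_domain slope_jump_support_subset
    by (intro sum.mono_neutral_left) (auto simp: K_def)
  also have "\<dots> = left_slope f (real p * 1) - left_slope f 1"
    using left_slope_telescope[of 1 p] p1 by simp
  also have "\<dots> = left_slope f 1 / p - left_slope f 1"
    using left_slope_mult[of 1] by simp
  finally show ?thesis
    using chi_divide_diff_eq_0[OF p_pos left_slope_in_Hp] by simp
qed

end

lemma inK_imp_periodic_piecewise_affine:
  assumes "prime p" "inK p f"
  obtains B where "periodic_piecewise_affine p f B"
proof -
  obtain B where "\<forall>x>0. f (real p * x) = f x" "\<forall>a b. 0 < a \<longrightarrow> finite (B \<inter> {a..b})"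
    "\<forall>a b. 0 < a \<longrightarrow> a < b \<longrightarrow> B \<inter> {a<..<b} = {} \<longrightarrow> (\<exists>s\<in>Hp p. \<exists>c. \<forall>x\<in>{a..b}. f x = s * x + c)"
    using assms(2) unfolding inK_def by blast
  then have "periodic_piecewise_affine p f B"
    using assms(1) by unfold_locales (simp_all add: prime_gt_0_nat)
  then show ?thesis by (rule that)
qed

theorem proposition5p5:
  fixes p :: nat
  assumes "prime p"
  shows "(\<forall>H\<in>Cp p. \<exists>!g. g \<in> extensional H \<and>
            (\<forall>l>0. H = scale l (Hp p) \<longrightarrow> (\<forall>x\<in>H. g x = chi p (x / l))))
       \<and> (\<forall>f. inK p f \<longrightarrow> principal_div p f \<in> Div p \<and> chiDiv p (principal_div p f) = 0)"
proof (intro conjI ballI allI impI)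
  fix H assume "H \<in> Cp p"
  then show "\<exists>!g. g \<in> extensional H \<and> (\<forall>l>0. H = scale l (Hp p) \<longrightarrow> (\<forall>x\<in>H. g x = chi p (x / l)))"
    by (rule ex1_chi_on_Cp[OF assms])
next
  fix f assume "inK p f"
  then obtain B where "periodic_piecewise_affine p f B"
    using inK_imp_periodic_piecewise_affine[OF assms] by blast
  then interpret periodic_piecewise_affine p f B .
  show "principal_div p f \<in> Div p" by (rule principal_div_in_Div)
  show "chiDiv p (principal_div p f) = 0" by (rule chiDiv_principal_div)
qed

end
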